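(* Let $\bar\nu\in\Pi_{2,SR}$ be an essentially proper policy of player II in a finite-space SSP game (as in the context) satisfying the Finite-Space SSP Game Model Assumption. Then the single-player problem $\mathrm{SSP}_{\bar\nu}$ satisfies the SSP Model Assumption: there exists a proper policy among its stationary deterministic policies, and every improper stationary deterministic policy incurs infinite cost for at least one initial state.
   Context: Finite-space game: $S=\{1,\dots,n\}$, $S_o=S\cup\{0\}$, $0$ absorbing cost-free termination state. At $i\in S$ players I and II have finite control sets $U(i),V(i)$; under $(u,v)$ the state moves to $j\in S_o$ w.p. $p_{ij}(u,v)$ with transition cost $\hat g(i,u,v,j)$ paid by player I; $g(i,u,v)$ is the expected one-stage cost. $J(i;\pi_1,\pi_2)=\liminf_{t\to\infty}E_{\pi_1\pi_2}[\sum_{k=0}^t\hat g(i_k,u_k,v_k,i_{k+1})\mid i_0=i]$. $\Pi_{1,SR},\Pi_{2,SR}$: stationary randomized policies ($\mu(\cdot\mid i)\in\mathcal P(U(i))$, $\nu(\cdot\mid i)\in\mathcal P(V(i))$). Prolonging pair: for some initial state the termination state is with positive probability never reached; non-prolonging otherwise. $\nu\in\Pi_{2,SR}$ is essentially proper if some $\mu\in\Pi_{1,SR}$ makes $(\mu,\nu)$ non-prolonging and every $\mu\in\Pi_{1,SR}$ with $(\mu,\nu)$ prolonging has $J(i;\mu,\nu)=+\infty$ for some $i$. Finite-Space SSP Game Model Assumption: (i) there is $\bar\mu\in\Pi_{1,SR}$ with $J(i;\bar\mu,\nu)<+\infty$ for all $\nu\in\Pi_{2,SR}$, all $i$; (ii)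 there is $\bar\nu\in\Pi_{2,SR}$ with $J(i;\mu,\bar\nu)>-\infty$ for all $\mu$, all $i$; (iii) every prolonging pair in $\Pi_{1,SR}\times\Pi_{2,SR}$ has $J(i;\mu,\nu)\in\{\pm\infty\}$ for some $i$. $R=\{(i,u,v):i\in S,u\in U(i),v\in V(i)\}$. $\mathrm{SSP}_{\bar\nu}$ is the single-player (player I, cost-minimizing) problem with state space $S_o\cup R$ and cost-free termination state $0$: from $\ell=(i,u,v)\in R$ the system moves (uncontrolled) to $j\in S_o$ w.p. $p_{ij}(u,v)$ with expected one-stage cost $g(i,u,v)$; at $i\in S$ the control set is $U(i)$ and control $u$ moves the system to $j\in S_o$ w.p. $p_{\bar\nu,ij}(u)=\sum_{v\in V(i)}\bar\nu(v\mid i)p_{ij}(u,v)$ with expected one-stage cost $g_{\bar\nu}(i,u)=\sum_{v}\bar\nu(v\mid i)g(i,u,v)$. A policy of a single-player SSP is proper if under it the termination state is reached w.p.1 from every initial state, and improper otherwise; costs of policies are total expected costs (liminf of expected partial sums). *)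

theory Defs
  imports Complex_Main "HOL-Library.Extended_Real"
begin

fun mc_pow :: "'s set \<Rightarrow> ('s \<Rightarrow> 's \<Rightarrow> real) \<Rightarrow> nat \<Rightarrow> 's \<Rightarrow> 's \<Rightarrow> real" where
  "mc_pow X P 0 x y = (if x = y then 1 else 0)"
| "mc_pow X P (Suc k) x y = (\<Sum>z\<in>X. mc_pow X P k x z * P z y)"

definition mc_total_cost ::
  "'s set \<Rightarrow> ('s \<Rightarrow> 's \<Rightarrow> real) \<Rightarrow> ('s \<Rightarrow> real) \<Rightarrow> 's \<Rightarrow> ereal" where
  "mc_total_cost X P c x =
     liminf (\<lambda>t. ereal (\<Sum>k\<le>t. \<Sum>y\<in>X. mc_pow X P k x y * c y))"

text \<open>The absorbing termination state t is reached with probability one from x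
  (the probability of having reached t by time k is mc_pow X P k x t,
  since t is absorbing).\<close>
definition mc_terminates ::
  "'s set \<Rightarrow> ('s \<Rightarrow> 's \<Rightarrow> real) \<Rightarrow> 's \<Rightarrow> 's \<Rightarrow> bool" where
  "mc_terminates X P t x \<longleftrightarrow> (\<lambda>k. mc_pow X P k x t) \<longlonglongrightarrow> 1"

text \<open>States 1..n, termination state 0; U i, V i control sets;
  p i u v j transition probabilities; gh i u v j transition costs (g-hat).\<close>
definition ssp_game ::
  "nat \<Rightarrow> (nat \<Rightarrow> 'u set) \<Rightarrow> (nat \<Rightarrow> 'v set) \<Rightarrow> (nat \<Rightarrow> 'u \<Rightarrow> 'v \<Rightarrow> nat \<Rightarrow> real) \<Rightarrow> bool" where
  "ssp_game n U V p \<longleftrightarrow>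
     (\<forall>i\<in>{1..n}. finite (U i) \<and> U i \<noteq> {} \<and> finite (V i) \<and> V i \<noteq> {} \<and>
        (\<forall>u\<in>U i. \<forall>v\<in>V i. (\<forall>j\<in>{0..n}. 0 \<le> p i u v j) \<and> (\<Sum>j\<in>{0..n}. p i u v j) = 1))"

definition g_exp ::
  "nat \<Rightarrow> (nat \<Rightarrow> 'u \<Rightarrow> 'v \<Rightarrow> nat \<Rightarrow> real) \<Rightarrow> (nat \<Rightarrow> 'u \<Rightarrow> 'v \<Rightarrow> nat \<Rightarrow> real)
     \<Rightarrow> nat \<Rightarrow> 'u \<Rightarrow> 'v \<Rightarrow> real" where
  "g_exp n p gh i u v = (\<Sum>j\<in>{0..n}. p i u v j * gh i u v j)"

definition sr_policy :: "nat \<Rightarrow> (nat \<Rightarrow> 'a set) \<Rightarrow> (nat \<Rightarrow> 'a \<Rightarrow> real) \<Rightarrow> bool" where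
  "sr_policy n W mu \<longleftrightarrow> (\<forall>i\<in>{1..n}. (\<forall>w\<in>W i. 0 \<le> mu i w) \<and> (\<Sum>w\<in>W i. mu i w) = 1)"

definition game_P ::
  "nat \<Rightarrow> (nat \<Rightarrow> 'u set) \<Rightarrow> (nat \<Rightarrow> 'v set) \<Rightarrow> (nat \<Rightarrow> 'u \<Rightarrow> 'v \<Rightarrow> nat \<Rightarrow> real)
     \<Rightarrow> (nat \<Rightarrow> 'u \<Rightarrow> real) \<Rightarrow> (nat \<Rightarrow> 'v \<Rightarrow> real) \<Rightarrow> nat \<Rightarrow> nat \<Rightarrow> real" where
  "game_P n U V p mu nu x y =
     (if x = 0 then (if y = 0 then 1 else 0)
      else (\<Sum>u\<in>U x. \<Sum>v\<in>V x. mu x u * nu x v * p x u v y))"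

definition game_c ::
  "nat \<Rightarrow> (nat \<Rightarrow> 'u set) \<Rightarrow> (nat \<Rightarrow> 'v set) \<Rightarrow> (nat \<Rightarrow> 'u \<Rightarrow> 'v \<Rightarrow> nat \<Rightarrow> real)
     \<Rightarrow> (nat \<Rightarrow> 'u \<Rightarrow> 'v \<Rightarrow> nat \<Rightarrow> real)
     \<Rightarrow> (nat \<Rightarrow> 'u \<Rightarrow> real) \<Rightarrow> (nat \<Rightarrow> 'v \<Rightarrow> real) \<Rightarrow> nat \<Rightarrow> real" where
  "game_c n U V p gh mu nu x =
     (if x = 0 then 0
      else (\<Sum>u\<in>U x. \<Sum>v\<in>V x. mu x u * nu x v * g_exp n p gh x u v))"

definition game_J ::
  "nat \<Rightarrow> (nat \<Rightarrow> 'u set) \<Rightarrow> (nat \<Rightarrow> 'v set) \<Rightarrow> (nat \<Rightarrow> 'u \<Rightarrow> 'v \<Rightarrow> nat \<Rightarrow> real)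
     \<Rightarrow> (nat \<Rightarrow> 'u \<Rightarrow> 'v \<Rightarrow> nat \<Rightarrow> real)
     \<Rightarrow> (nat \<Rightarrow> 'u \<Rightarrow> real) \<Rightarrow> (nat \<Rightarrow> 'v \<Rightarrow> real) \<Rightarrow> nat \<Rightarrow> ereal" where
  "game_J n U V p gh mu nu i =
     mc_total_cost {0..n} (game_P n U V p mu nu) (game_c n U V p gh mu nu) i"

definition prolonging ::
  "nat \<Rightarrow> (nat \<Rightarrow> 'u set) \<Rightarrow> (nat \<Rightarrow> 'v set) \<Rightarrow> (nat \<Rightarrow> 'u \<Rightarrow> 'v \<Rightarrow> nat \<Rightarrow> real)
     \<Rightarrow> (nat \<Rightarrow> 'u \<Rightarrow> real) \<Rightarrow> (nat \<Rightarrow> 'v \<Rightarrow> real) \<Rightarrow> bool" where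
  "prolonging n U V p mu nu \<longleftrightarrow>
     (\<exists>i\<in>{1..n}. \<not> mc_terminates {0..n} (game_P n U V p mu nu) 0 i)"

definition essentially_proper ::
  "nat \<Rightarrow> (nat \<Rightarrow> 'u set) \<Rightarrow> (nat \<Rightarrow> 'v set) \<Rightarrow> (nat \<Rightarrow> 'u \<Rightarrow> 'v \<Rightarrow> nat \<Rightarrow> real)
     \<Rightarrow> (nat \<Rightarrow> 'u \<Rightarrow> 'v \<Rightarrow> nat \<Rightarrow> real) \<Rightarrow> (nat \<Rightarrow> 'v \<Rightarrow> real) \<Rightarrow> bool" where
  "essentially_proper n U V p gh nu \<longleftrightarrow>
     sr_policy n V nu \<and>
     (\<exists>mu. sr_policy n U mu \<and> \<not> prolonging n U V p mu nu) \<and>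
     (\<forall>mu. sr_policy n U mu \<and> prolonging n U V p mu nu \<longrightarrow>
        (\<exists>i\<in>{1..n}. game_J n U V p gh mu nu i = \<infinity>))"

definition game_model_assumption ::
  "nat \<Rightarrow> (nat \<Rightarrow> 'u set) \<Rightarrow> (nat \<Rightarrow> 'v set) \<Rightarrow> (nat \<Rightarrow> 'u \<Rightarrow> 'v \<Rightarrow> nat \<Rightarrow> real)
     \<Rightarrow> (nat \<Rightarrow> 'u \<Rightarrow> 'v \<Rightarrow> nat \<Rightarrow> real) \<Rightarrow> bool" where
  "game_model_assumption n U V p gh \<longleftrightarrow>
     (\<exists>mu. sr_policy n U mu \<and>
        (\<forall>nu. sr_policy n V nu \<longrightarrow> (\<forall>i\<in>{1..n}. game_J n U V p gh mu nu i < \<infinity>))) \<and>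
     (\<exists>nu. sr_policy n V nu \<and>
        (\<forall>mu. sr_policy n U mu \<longrightarrow> (\<forall>i\<in>{1..n}. game_J n U V p gh mu nu i > - \<infinity>))) \<and>
     (\<forall>mu nu. sr_policy n U mu \<and> sr_policy n V nu \<and> prolonging n U V p mu nu \<longrightarrow>
        (\<exists>i\<in>{1..n}. game_J n U V p gh mu nu i \<in> {\<infinity>, - \<infinity>}))"

text \<open>States: Inl i for i in S_o, Inr (i,u,v) for elements of R.\<close>
definition aux_states ::
  "nat \<Rightarrow> (nat \<Rightarrow> 'u set) \<Rightarrow> (nat \<Rightarrow> 'v set) \<Rightarrow> (nat + nat \<times> 'u \<times> 'v) set" where
  "aux_states n U V =
     Inl ` {0..n} \<union> Inr ` {(i, u, v). i \<in> {1..n} \<and> u \<in> U i \<and> v \<in> V i}"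

definition sd_policy :: "nat \<Rightarrow> (nat \<Rightarrow> 'u set) \<Rightarrow> (nat \<Rightarrow> 'u) \<Rightarrow> bool" where
  "sd_policy n U mu \<longleftrightarrow> (\<forall>i\<in>{1..n}. mu i \<in> U i)"

definition aux_P ::
  "(nat \<Rightarrow> 'v set) \<Rightarrow> (nat \<Rightarrow> 'u \<Rightarrow> 'v \<Rightarrow> nat \<Rightarrow> real) \<Rightarrow> (nat \<Rightarrow> 'v \<Rightarrow> real)
     \<Rightarrow> (nat \<Rightarrow> 'u) \<Rightarrow> (nat + nat \<times> 'u \<times> 'v) \<Rightarrow> (nat + nat \<times> 'u \<times> 'v) \<Rightarrow> real" where
  "aux_P V p nub mu x y =
     (case x of
        Inl i \<Rightarrow>
          (if i = 0 then (if y = Inl 0 then 1 else 0)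
           else (case y of Inl j \<Rightarrow> (\<Sum>v\<in>V i. nub i v * p i (mu i) v j) | Inr _ \<Rightarrow> 0))
      | Inr (i, u, v) \<Rightarrow> (case y of Inl j \<Rightarrow> p i u v j | Inr _ \<Rightarrow> 0))"

definition aux_c ::
  "nat \<Rightarrow> (nat \<Rightarrow> 'v set) \<Rightarrow> (nat \<Rightarrow> 'u \<Rightarrow> 'v \<Rightarrow> nat \<Rightarrow> real) \<Rightarrow> (nat \<Rightarrow> 'u \<Rightarrow> 'v \<Rightarrow> nat \<Rightarrow> real)
     \<Rightarrow> (nat \<Rightarrow> 'v \<Rightarrow> real) \<Rightarrow> (nat \<Rightarrow> 'u) \<Rightarrow> (nat + nat \<times> 'u \<times> 'v) \<Rightarrow> real" where
  "aux_c n V p gh nub mu x =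
     (case x of
        Inl i \<Rightarrow> (if i = 0 then 0 else (\<Sum>v\<in>V i. nub i v * g_exp n p gh i (mu i) v))
      | Inr (i, u, v) \<Rightarrow> g_exp n p gh i u v)"

definition aux_proper ::
  "nat \<Rightarrow> (nat \<Rightarrow> 'u set) \<Rightarrow> (nat \<Rightarrow> 'v set) \<Rightarrow> (nat \<Rightarrow> 'u \<Rightarrow> 'v \<Rightarrow> nat \<Rightarrow> real)
     \<Rightarrow> (nat \<Rightarrow> 'v \<Rightarrow> real) \<Rightarrow> (nat \<Rightarrow> 'u) \<Rightarrow> bool" where
  "aux_proper n U V p nub mu \<longleftrightarrow>
     (\<forall>x\<in>aux_states n U V. mc_terminates (aux_states n U V) (aux_P V p nub mu) (Inl 0) x)"

definition aux_cost ::
  "nat \<Rightarrow> (nat \<Rightarrow> 'u set) \<Rightarrow> (nat \<Rightarrow> 'v set) \<Rightarrow> (nat \<Rightarrow> 'u \<Rightarrow> 'v \<Rightarrow> nat \<Rightarrow> real)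
     \<Rightarrow> (nat \<Rightarrow> 'u \<Rightarrow> 'v \<Rightarrow> nat \<Rightarrow> real) \<Rightarrow> (nat \<Rightarrow> 'v \<Rightarrow> real) \<Rightarrow> (nat \<Rightarrow> 'u)
     \<Rightarrow> (nat + nat \<times> 'u \<times> 'v) \<Rightarrow> ereal" where
  "aux_cost n U V p gh nub mu x =
     mc_total_cost (aux_states n U V) (aux_P V p nub mu) (aux_c n V p gh nub mu) x"

definition aux_ssp_model_assumption ::
  "nat \<Rightarrow> (nat \<Rightarrow> 'u set) \<Rightarrow> (nat \<Rightarrow> 'v set) \<Rightarrow> (nat \<Rightarrow> 'u \<Rightarrow> 'v \<Rightarrow> nat \<Rightarrow> real)
     \<Rightarrow> (nat \<Rightarrow> 'u \<Rightarrow> 'v \<Rightarrow> nat \<Rightarrow> real) \<Rightarrow> (nat \<Rightarrow> 'v \<Rightarrow> real) \<Rightarrow> bool" where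
  "aux_ssp_model_assumption n U V p gh nub \<longleftrightarrow>
     (\<exists>mu. sd_policy n U mu \<and> aux_proper n U V p nub mu) \<and>
     (\<forall>mu. sd_policy n U mu \<and> \<not> aux_proper n U V p nub mu \<longrightarrow>
        (\<exists>x\<in>aux_states n U V. aux_cost n U V p gh nub mu x = \<infinity>))"

end

theory Submission
  imports Defs
begin

text \<open>If the policy \<open>\<nu>\<close> of player II admits a non-prolonging randomized policy of player I,
  then it also admits a non-prolonging deterministic one: every non-terminal state reaches \<open>0\<close> in some least number of
  steps, its hitting time, and at each state some single control leads with positive probability
  to a state with smaller hitting time; always playing such a control still lets every state reach
  \<open>0\<close>, which in a finite absorbing chain forces termination with probability one.
  From a state \<open>i \<in> S\<close> of \<open>SSP\<^sub>\<nu>\<close> a deterministic policy \<open>\<mu>\<close> behaves like the game under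
  \<open>(\<mu>, \<nu>)\<close> and never enters \<open>R\<close>, while from \<open>(i,u,v) \<in> R\<close> it moves to \<open>S\<^sub>o\<close> in one step. Hence
  \<open>\<mu>\<close> is proper iff \<open>(\<mu>, \<nu>)\<close> is non-prolonging, and the costs agree on \<open>S\<close>, so essential
  properness of \<open>\<nu>\<close> gives both halves of the SSP Model Assumption.\<close>

section \<open>Finite absorbing Markov chains\<close>

lemma mc_pow_add:
  assumes "finite X" and "y \<in> X"
  shows "mc_pow X P (k + m) x y = (\<Sum>z\<in>X. mc_pow X P k x z * mc_pow X P m z y)"
  using assms(2)
proof (induction m arbitrary: y)
  case 0
  then show ?case using assms(1) by (simp add: if_distrib cong: if_cong)
next
  case (Suc m)
  have "mc_pow X P (k + Suc m) x y = (\<Sum>w\<in>X. mc_pow X P (k + m) x w * P w y)"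
    by simp
  also have "\<dots> = (\<Sum>w\<in>X. \<Sum>z\<in>X. mc_pow X P k x z * mc_pow X P m z w * P w y)"
    using Suc.IH by (simp add: sum_distrib_right)
  also have "\<dots> = (\<Sum>z\<in>X. mc_pow X P k x z * (\<Sum>w\<in>X. mc_pow X P m z w * P w y))"
    by (subst sum.swap) (simp add: sum_distrib_left mult.assoc)
  finally show ?case by simp
qed

lemma mc_pow_Suc_left:
  assumes "finite X" and "x \<in> X" and "y \<in> X"
  shows "mc_pow X P (Suc m) x y = (\<Sum>z\<in>X. P x z * mc_pow X P m z y)"
proof -
  have "mc_pow X P 1 x z = (\<Sum>w\<in>X. if x = w then P w z else 0)" for z
    by (simp, rule sum.cong) auto
  then have "mc_pow X P 1 x z = P x z" for z
    using assms(1,2) by simp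
  then show ?thesis
    using mc_pow_add[OF assms(1,3), where k = 1 and m = m and x = x and P = P] by simp
qed

locale absorbing_chain =
  fixes X :: "'s set" and P :: "'s \<Rightarrow> 's \<Rightarrow> real" and t :: 's
  assumes finite_states: "finite X" and target: "t \<in> X"
    and P_nonneg: "\<And>x y. x \<in> X \<Longrightarrow> y \<in> X \<Longrightarrow> 0 \<le> P x y"
    and P_row_sum: "\<And>x. x \<in> X \<Longrightarrow> (\<Sum>y\<in>X. P x y) = 1"
    and target_absorbing: "P t t = 1"
begin

lemma mc_pow_nonneg: "y \<in> X \<Longrightarrow> 0 \<le> mc_pow X P k x y"
  by (induction k arbitrary: y) (auto intro!: sum_nonneg mult_nonneg_nonneg P_nonneg)

lemma mc_pow_row_sum: "x \<in> X \<Longrightarrow> (\<Sum>y\<in>X. mc_pow X P k x y) = 1"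
proof (induction k)
  case 0
  then show ?case using finite_states by simp
next
  case (Suc k)
  have "(\<Sum>y\<in>X. mc_pow X P (Suc k) x y) = (\<Sum>z\<in>X. mc_pow X P k x z * (\<Sum>y\<in>X. P z y))"
    by (simp add: sum_distrib_left) (rule sum.swap)
  also have "\<dots> = (\<Sum>z\<in>X. mc_pow X P k x z)"
    using P_row_sum by simp
  finally show ?case using Suc by simp
qed

lemma absorption_mono: "k \<le> m \<Longrightarrow> mc_pow X P k x t \<le> mc_pow X P m x t"
proof (rule lift_Suc_mono_le[of "\<lambda>k. mc_pow X P k x t"])
  fix k
  have "mc_pow X P k x t * P t t \<le> (\<Sum>z\<in>X. mc_pow X P k x z * P z t)"
    by (rule member_le_sum) (auto intro!: mult_nonneg_nonneg mc_pow_nonneg P_nonneg target finite_states)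
  then show "mc_pow X P k x t \<le> mc_pow X P (Suc k) x t"
    using target_absorbing by simp
qed

lemma absorption_le_1: "x \<in> X \<Longrightarrow> mc_pow X P k x t \<le> 1"
  using member_le_sum[of t X "mc_pow X P k x"] mc_pow_row_sum[of x k]
  by (simp add: mc_pow_nonneg target finite_states)

lemma absorption_from_target: "mc_pow X P k t t = 1"
  using absorption_mono[of 0 k t] absorption_le_1[OF target, of k] by simp

lemma terminates_from_target: "mc_terminates X P t t"
  by (simp add: mc_terminates_def absorption_from_target)

text \<open>Uniform reachability within \<open>N\<close> steps contracts the non-absorption probability by the
  factor \<open>1 - \<delta>\<close> over every block of \<open>N\<close> steps.\<close>

lemma absorption_contract:
  assumes x: "x \<in> X" and \<delta>: "\<And>z. z \<in> X \<Longrightarrow> \<delta> \<le> mc_pow X P N z t"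
  shows "1 - mc_pow X P (k + N) x t \<le> (1 - \<delta>) * (1 - mc_pow X P k x t)"
proof -
  have "1 - mc_pow X P (k + N) x t = (\<Sum>z\<in>X. mc_pow X P k x z * (1 - mc_pow X P N z t))"
    using mc_pow_add[OF finite_states target] mc_pow_row_sum[OF x]
    by (simp add: right_diff_distrib sum_subtractf)
  also have "\<dots> = (\<Sum>z\<in>X-{t}. mc_pow X P k x z * (1 - mc_pow X P N z t))"
    using finite_states target absorption_from_target by (simp add: sum.remove)
  also have "\<dots> \<le> (\<Sum>z\<in>X-{t}. mc_pow X P k x z * (1 - \<delta>))"
    by (rule sum_mono) (auto intro!: mult_left_mono mc_pow_nonneg \<delta>)
  also have "\<dots> = (1 - \<delta>) * ((\<Sum>z\<in>X. mc_pow X P k x z) - mc_pow X P k x t)"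
    using finite_states target by (simp add: sum_distrib_left sum_diff1 right_diff_distrib mult.commute)
  also have "\<dots> = (1 - \<delta>) * (1 - mc_pow X P k x t)"
    using mc_pow_row_sum[OF x] by simp
  finally show ?thesis .
qed

lemma absorption_geometric:
  assumes x: "x \<in> X" and \<delta>: "\<And>z. z \<in> X \<Longrightarrow> \<delta> \<le> mc_pow X P N z t" and "\<delta> \<le> 1"
  shows "1 - mc_pow X P (j * N) x t \<le> (1 - \<delta>) ^ j"
proof (induction j)
  case 0
  then show ?case using mc_pow_nonneg[OF target, of 0 x] by simp
next
  case (Suc j)
  have "1 - mc_pow X P (Suc j * N) x t \<le> (1 - \<delta>) * (1 - mc_pow X P (j * N) x t)"
    using absorption_contract[OF x \<delta>, of "j * N"] by (simp add: add.commute)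
  also have "\<dots> \<le> (1 - \<delta>) * (1 - \<delta>) ^ j"
    using Suc \<open>\<delta> \<le> 1\<close> by (intro mult_left_mono) auto
  finally show ?case by simp
qed

lemma terminates_if_reachable:
  assumes reach: "\<And>x. x \<in> X \<Longrightarrow> \<exists>k. 0 < mc_pow X P k x t" and x: "x \<in> X"
  shows "mc_terminates X P t x"
proof -
  obtain k where k: "\<And>x. x \<in> X \<Longrightarrow> 0 < mc_pow X P (k x) x t"
    using reach by metis
  define N where "N = Max (k ` X)"
  define \<delta> where "\<delta> = Min ((\<lambda>z. mc_pow X P N z t) ` X)"
  have \<delta>_le: "\<delta> \<le> mc_pow X P N z t" if "z \<in> X" for z
    unfolding \<delta>_def using finite_states that by simp
  have "0 < mc_pow X P N z t" if "z \<in> X" for z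
    using absorption_mono[of "k z" N z] k[OF that] finite_states that by (simp add: N_def)
  then have \<delta>_pos: "0 < \<delta>"
    unfolding \<delta>_def using finite_states target by (subst Min_gr_iff) auto
  have \<delta>_le_1: "\<delta> \<le> 1"
    using \<delta>_le[OF target] absorption_from_target by simp
  show ?thesis
    unfolding mc_terminates_def
  proof (rule LIMSEQ_I)
    fix r :: real
    assume "0 < r"
    then obtain j where j: "(1 - \<delta>) ^ j < r"
      using real_arch_pow_inv[of r "1 - \<delta>"] \<delta>_pos by auto
    have "\<bar>mc_pow X P m x t - 1\<bar> < r" if "j * N \<le> m" for m
      using absorption_mono[OF that, of x] absorption_geometric[OF x \<delta>_le \<delta>_le_1, of j]
        absorption_le_1[OF x, of m] j by linarith
    then show "\<exists>m0. \<forall>m\<ge>m0. norm (mc_pow X P m x t - 1) < r"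
      by auto
  qed
qed

lemma reachable_if_terminates:
  assumes "mc_terminates X P t x"
  shows "\<exists>k. 0 < mc_pow X P k x t"
proof -
  have "eventually (\<lambda>k. 0 < mc_pow X P k x t) sequentially"
    using assms unfolding mc_terminates_def by (rule order_tendstoD) simp
  then show ?thesis by (auto simp: eventually_sequentially)
qed

definition hitting_time :: "'s \<Rightarrow> nat" where
  "hitting_time x = (LEAST k. 0 < mc_pow X P k x t)"

lemma hitting_time_descent:
  assumes x: "x \<in> X" "x \<noteq> t" and "mc_terminates X P t x"
  shows "\<exists>z\<in>X. 0 < P x z \<and> hitting_time z < hitting_time x"
proof -
  have pos: "0 < mc_pow X P (hitting_time x) x t"
    unfolding hitting_time_def using reachable_if_terminates[OF assms(3)] by (rule LeastI_ex)
  have "hitting_time x \<noteq> 0"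
    using pos x by (metis less_irrefl mc_pow.simps(1))
  then obtain m where m: "hitting_time x = Suc m"
    using not0_implies_Suc by blast
  have "0 < (\<Sum>z\<in>X. P x z * mc_pow X P m z t)"
    using pos mc_pow_Suc_left[OF finite_states x(1) target] by (simp add: m)
  then obtain z where z: "z \<in> X" and zpos: "0 < P x z * mc_pow X P m z t"
    by (metis (no_types, lifting) not_less sum_nonpos)
  have "0 \<le> P x z" and "0 \<le> mc_pow X P m z t"
    using P_nonneg[OF x(1) z] mc_pow_nonneg[OF target] by auto
  then have "0 < P x z" and "0 < mc_pow X P m z t"
    using zpos by (auto simp: zero_less_mult_iff)
  moreover have "hitting_time z \<le> m"
    unfolding hitting_time_def by (rule Least_le) fact
  ultimately show ?thesis using z m by auto
qed

lemma reachable_if_descending: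
  fixes f :: "'s \<Rightarrow> nat"
  assumes descent: "\<And>x. x \<in> X \<Longrightarrow> x \<noteq> t \<Longrightarrow> \<exists>z\<in>X. 0 < P x z \<and> f z < f x"
  shows "x \<in> X \<Longrightarrow> \<exists>k. 0 < mc_pow X P k x t"
proof (induction "f x" arbitrary: x rule: less_induct)
  case less
  show ?case
  proof (cases "x = t")
    case True
    then show ?thesis using absorption_from_target by auto
  next
    case False
    then obtain z where z: "z \<in> X" "0 < P x z" "f z < f x"
      using descent less.prems by blast
    then obtain k where k: "0 < mc_pow X P k z t"
      using less.hyps by blast
    have "P x z * mc_pow X P k z t \<le> (\<Sum>z'\<in>X. P x z' * mc_pow X P k z' t)"
      using z less.prems
      by (intro member_le_sum mult_nonneg_nonneg P_nonneg mc_pow_nonneg target finite_states) auto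
    also have "\<dots> = mc_pow X P (Suc k) x t"
      using mc_pow_Suc_left[OF finite_states less.prems target] by simp
    finally show ?thesis
      using z(2) k by (metis mult_pos_pos order_less_le_trans)
  qed
qed

end

lemma absorbing_chain_game_P:
  assumes G: "ssp_game n U V p" and mu: "sr_policy n U mu" and nu: "sr_policy n V nu"
  shows "absorbing_chain {0..n} (game_P n U V p mu nu) 0"
proof
  fix x y
  assume x: "x \<in> {0..n}" and "y \<in> {0..n}"
  then show "0 \<le> game_P n U V p mu nu x y"
    using G mu nu unfolding game_P_def ssp_game_def sr_policy_def
    by (auto intro!: sum_nonneg mult_nonneg_nonneg)
next
  fix x
  assume x: "x \<in> {0..n}"
  show "(\<Sum>y\<in>{0..n}. game_P n U V p mu nu x y) = 1"
  proof (cases "x = 0")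
    case False
    then have x1: "x \<in> {1..n}" using x by auto
    have "(\<Sum>y\<in>{0..n}. game_P n U V p mu nu x y) =
          (\<Sum>u\<in>U x. \<Sum>v\<in>V x. mu x u * nu x v * (\<Sum>y\<in>{0..n}. p x u v y))"
      using False
      by (simp add: game_P_def sum_distrib_left sum.swap[of _ "{0..n}" "V x"] sum.swap[of _ "{0..n}" "U x"])
    also have "\<dots> = (\<Sum>u\<in>U x. mu x u * (\<Sum>v\<in>V x. nu x v))"
      using G x1 unfolding ssp_game_def by (simp add: sum_distrib_left)
    also have "\<dots> = 1"
      using mu nu x1 unfolding sr_policy_def by simp
    finally show ?thesis .
  qed (simp add: game_P_def)
qed (auto simp: game_P_def)

lemma not_prolonging_iff_terminates:
  assumes "ssp_game n U V p" and "sr_policy n U mu" and "sr_policy n V nu"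
  shows "\<not> prolonging n U V p mu nu \<longleftrightarrow>
    (\<forall>i\<in>{0..n}. mc_terminates {0..n} (game_P n U V p mu nu) 0 i)"
proof -
  interpret absorbing_chain "{0..n}" "game_P n U V p mu nu" 0
    using absorbing_chain_game_P[OF assms] .
  show ?thesis
    using terminates_from_target atLeast0_atMost_Suc_eq_insert_0[of "n - 1"]
    by (cases "n = 0") (auto simp: prolonging_def)
qed

lemma positive_game_P_action:
  assumes mu: "sr_policy n U mu" and i: "i \<in> {1..n}" and pos: "0 < game_P n U V p mu nu i z"
  shows "\<exists>u\<in>U i. 0 < (\<Sum>v\<in>V i. nu i v * p i u v z)"
proof (rule ccontr)
  assume "\<not> ?thesis"
  then have "mu i u * (\<Sum>v\<in>V i. nu i v * p i u v z) \<le> 0" if "u \<in> U i" for u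
    using mu i that by (intro mult_nonneg_nonpos) (auto simp: sr_policy_def not_less)
  then have "game_P n U V p mu nu i z \<le> 0"
    using i by (auto simp: game_P_def sum_distrib_left mult.assoc intro: sum_nonpos)
  then show False using pos by simp
qed

section \<open>Deterministic policies as randomized ones\<close>

definition det_policy :: "(nat \<Rightarrow> 'u) \<Rightarrow> nat \<Rightarrow> 'u \<Rightarrow> real" where
  "det_policy md i u = (if u = md i then 1 else 0)"

lemma sum_det_policy:
  assumes "finite (U i)" and "md i \<in> U i"
  shows "(\<Sum>u\<in>U i. \<Sum>v\<in>V. det_policy md i u * f v * h u v) = (\<Sum>v\<in>V. f v * h (md i) v)"
proof -
  have "(\<Sum>u\<in>U i. \<Sum>v\<in>V. det_policy md i u * f v * h u v) =
      (\<Sum>u\<in>U i. if u = md i then (\<Sum>v\<in>V. f v * h (md i) v) else 0)"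
    by (rule sum.cong) (auto simp: det_policy_def)
  then show ?thesis using assms by simp
qed

lemma sr_policy_det_policy:
  assumes "ssp_game n U V p" and "sd_policy n U md"
  shows "sr_policy n U (det_policy md)"
  using assms by (auto simp: sr_policy_def sd_policy_def ssp_game_def det_policy_def)

lemma game_P_det_policy:
  assumes "ssp_game n U V p" and "sd_policy n U md" and "i \<in> {1..n}"
  shows "game_P n U V p (det_policy md) nu i j = (\<Sum>v\<in>V i. nu i v * p i (md i) v j)"
  using assms
    sum_det_policy[where U = U and i = i and md = md and V = "V i" and f = "nu i" and h = "\<lambda>u v. p i u v j"]
  by (simp add: game_P_def ssp_game_def sd_policy_def)

lemma game_c_det_policy:
  assumes "ssp_game n U V p" and "sd_policy n U md" and "i \<in> {1..n}"
  shows "game_c n U V p gh (det_policy md) nu i = (\<Sum>v\<in>V i. nu i v * g_exp n p gh i (md i) v)"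
  using assms sum_det_policy[where U = U and i = i and md = md and V = "V i" and f = "nu i"
      and h = "\<lambda>u v. g_exp n p gh i u v"]
  by (simp add: game_c_def ssp_game_def sd_policy_def)

lemma exists_det_not_prolonging:
  assumes G: "ssp_game n U V p" and mu: "sr_policy n U mu" and nu: "sr_policy n V nu"
    and "\<not> prolonging n U V p mu nu"
  shows "\<exists>md. sd_policy n U md \<and> \<not> prolonging n U V p (det_policy md) nu"
proof -
  interpret C: absorbing_chain "{0..n}" "game_P n U V p mu nu" 0
    using absorbing_chain_game_P[OF G mu nu] .
  have T: "\<forall>i\<in>{0..n}. mc_terminates {0..n} (game_P n U V p mu nu) 0 i"
    using assms not_prolonging_iff_terminates by blast
  have "\<forall>i\<in>{1..n}. \<exists>u. u \<in> U i \<and>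
      (\<exists>z\<in>{0..n}. 0 < (\<Sum>v\<in>V i. nu i v * p i u v z) \<and> C.hitting_time z < C.hitting_time i)"
  proof
    fix i
    assume i: "i \<in> {1..n}"
    then obtain z where "z \<in> {0..n}" "0 < game_P n U V p mu nu i z"
        "C.hitting_time z < C.hitting_time i"
      using C.hitting_time_descent[of i] T by force
    then show "\<exists>u. u \<in> U i \<and>
        (\<exists>z\<in>{0..n}. 0 < (\<Sum>v\<in>V i. nu i v * p i u v z) \<and> C.hitting_time z < C.hitting_time i)"
      using positive_game_P_action[OF mu i] by blast
  qed
  from bchoice[OF this] obtain md where md: "\<forall>i\<in>{1..n}. md i \<in> U i \<and>
      (\<exists>z\<in>{0..n}. 0 < (\<Sum>v\<in>V i. nu i v * p i (md i) v z) \<and> C.hitting_time z < C.hitting_time i)"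
    by blast
  then have sd: "sd_policy n U md" by (simp add: sd_policy_def)
  have sr: "sr_policy n U (det_policy md)"
    using sr_policy_det_policy[OF G sd] .
  interpret D: absorbing_chain "{0..n}" "game_P n U V p (det_policy md) nu" 0
    using absorbing_chain_game_P[OF G sr nu] .
  have "\<exists>z\<in>{0..n}. 0 < game_P n U V p (det_policy md) nu i z \<and> C.hitting_time z < C.hitting_time i"
    if "i \<in> {0..n}" "i \<noteq> 0" for i
  proof -
    have i: "i \<in> {1..n}" using that by auto
    show ?thesis using md i game_P_det_policy[OF G sd i] by simp
  qed
  then have "\<exists>k. 0 < mc_pow {0..n} (game_P n U V p (det_policy md) nu) k i 0" if "i \<in> {0..n}" for i
    using D.reachable_if_descending that by blast
  then have "\<forall>i\<in>{0..n}. mc_terminates {0..n} (game_P n U V p (det_policy md) nu) 0 i"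
    using D.terminates_if_reachable by blast
  then show ?thesis
    using sd not_prolonging_iff_terminates[OF G sr nu] by blast
qed

section \<open>Embedding the game under a deterministic policy into \<open>SSP\<^sub>\<nu>\<close>\<close>

definition triples :: "nat \<Rightarrow> (nat \<Rightarrow> 'u set) \<Rightarrow> (nat \<Rightarrow> 'v set) \<Rightarrow> (nat \<times> 'u \<times> 'v) set" where
  "triples n U V = {(i, u, v). i \<in> {1..n} \<and> u \<in> U i \<and> v \<in> V i}"

lemma finite_triples:
  assumes "ssp_game n U V p"
  shows "finite (triples n U V)"
proof (rule finite_subset)
  show "triples n U V \<subseteq> Sigma {1..n} (\<lambda>i. U i \<times> V i)"
    by (auto simp: triples_def)
  show "finite (Sigma {1..n} (\<lambda>i. U i \<times> V i))"
    using assms by (intro finite_SigmaI) (auto simp: ssp_game_def)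
qed

lemma aux_states_eq: "aux_states n U V = Inl ` {0..n} \<union> Inr ` triples n U V"
  by (simp add: aux_states_def triples_def)

lemma finite_aux_states: "ssp_game n U V p \<Longrightarrow> finite (aux_states n U V)"
  unfolding aux_states_eq by (intro finite_UnI finite_imageI finite_triples finite_atLeastAtMost)

lemma sum_aux_states:
  assumes "ssp_game n U V p"
  shows "(\<Sum>z\<in>aux_states n U V. F z) = (\<Sum>j\<in>{0..n}. F (Inl j)) + (\<Sum>r\<in>triples n U V. F (Inr r))"
  unfolding aux_states_eq using finite_triples[OF assms]
  by (subst sum.union_disjoint) (auto simp: sum.reindex)

lemma aux_P_Inl_Inl:
  assumes "ssp_game n U V p" and "sd_policy n U md" and "i \<in> {0..n}"
  shows "aux_P V p nub md (Inl i) (Inl j) = game_P n U V p (det_policy md) nub i j"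
  using assms game_P_det_policy[OF assms(1,2), of i nub j]
  by (cases "i = 0") (auto simp: aux_P_def game_P_def)

lemma aux_P_Inl_Inr: "aux_P V p nub md (Inl i) (Inr r) = 0"
  by (simp add: aux_P_def)

lemma aux_P_Inr: "aux_P V p nub md (Inr (i, u, v)) y = (case y of Inl j \<Rightarrow> p i u v j | Inr _ \<Rightarrow> 0)"
  by (simp add: aux_P_def)

lemma aux_c_Inl:
  assumes "ssp_game n U V p" and "sd_policy n U md" and "i \<in> {0..n}"
  shows "aux_c n V p gh nub md (Inl i) = game_c n U V p gh (det_policy md) nub i"
  using assms game_c_det_policy[OF assms(1,2), of i gh nub]
  by (cases "i = 0") (auto simp: aux_c_def game_c_def)

lemma mc_pow_aux_Inl:
  assumes G: "ssp_game n U V p" and sd: "sd_policy n U md"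
  shows "y \<in> aux_states n U V \<Longrightarrow> mc_pow (aux_states n U V) (aux_P V p nub md) k (Inl i) y =
     (case y of Inl j \<Rightarrow> mc_pow {0..n} (game_P n U V p (det_policy md) nub) k i j | Inr _ \<Rightarrow> 0)"
proof (induction k arbitrary: y)
  case 0
  then show ?case by (cases y) auto
next
  case (Suc k)
  have "mc_pow (aux_states n U V) (aux_P V p nub md) k (Inl i) (Inl j) =
      mc_pow {0..n} (game_P n U V p (det_policy md) nub) k i j" if "j \<in> {0..n}" for j
    using Suc.IH[of "Inl j"] that by (simp add: aux_states_def)
  moreover have "mc_pow (aux_states n U V) (aux_P V p nub md) k (Inl i) (Inr r) = 0"
    if "r \<in> triples n U V" for r
    using Suc.IH[of "Inr r"] that by (simp add: aux_states_eq)
  ultimately have "mc_pow (aux_states n U V) (aux_P V p nub md) (Suc k) (Inl i) y =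
     (\<Sum>j\<in>{0..n}. mc_pow {0..n} (game_P n U V p (det_policy md) nub) k i j * aux_P V p nub md (Inl j) y)"
    by (simp add: sum_aux_states[OF G])
  also have "\<dots> = (case y of Inl j \<Rightarrow> mc_pow {0..n} (game_P n U V p (det_policy md) nub) (Suc k) i j
      | Inr _ \<Rightarrow> 0)"
    by (cases y) (simp_all add: aux_P_Inl_Inl[OF G sd] aux_P_Inl_Inr)
  finally show ?case .
qed

lemma mc_pow_aux_Inl_Inl:
  assumes "ssp_game n U V p" and "sd_policy n U md" and "j \<in> {0..n}"
  shows "mc_pow (aux_states n U V) (aux_P V p nub md) k (Inl i) (Inl j) =
    mc_pow {0..n} (game_P n U V p (det_policy md) nub) k i j"
  using mc_pow_aux_Inl[OF assms(1,2), of "Inl j"] assms(3) by (simp add: aux_states_def)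

lemma mc_pow_aux_Inl_Inr:
  assumes "ssp_game n U V p" and "sd_policy n U md" and "r \<in> triples n U V"
  shows "mc_pow (aux_states n U V) (aux_P V p nub md) k (Inl i) (Inr r) = 0"
  using mc_pow_aux_Inl[OF assms(1,2), of "Inr r"] assms(3) by (simp add: aux_states_eq)

lemma aux_cost_Inl:
  assumes G: "ssp_game n U V p" and sd: "sd_policy n U md"
  shows "aux_cost n U V p gh nub md (Inl i) = game_J n U V p gh (det_policy md) nub i"
proof -
  have "(\<Sum>y\<in>aux_states n U V. mc_pow (aux_states n U V) (aux_P V p nub md) k (Inl i) y * aux_c n V p gh nub md y)
      = (\<Sum>j\<in>{0..n}. mc_pow {0..n} (game_P n U V p (det_policy md) nub) k i j * game_c n U V p gh (det_policy md) nub j)" for k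
    by (simp add: sum_aux_states[OF G] mc_pow_aux_Inl_Inl[OF G sd] mc_pow_aux_Inl_Inr[OF G sd] aux_c_Inl[OF G sd])
  then show ?thesis by (simp add: aux_cost_def game_J_def mc_total_cost_def)
qed

lemma aux_proper_if_not_prolonging:
  assumes G: "ssp_game n U V p" and sd: "sd_policy n U md" and nu: "sr_policy n V nub"
    and "\<not> prolonging n U V p (det_policy md) nub"
  shows "aux_proper n U V p nub md"
  unfolding aux_proper_def
proof
  have T: "\<forall>i\<in>{0..n}. mc_terminates {0..n} (game_P n U V p (det_policy md) nub) 0 i"
    using assms not_prolonging_iff_terminates[OF G sr_policy_det_policy[OF G sd] nu] by blast
  fix x
  assume x: "x \<in> aux_states n U V"
  show "mc_terminates (aux_states n U V) (aux_P V p nub md) (Inl 0) x"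
  proof (cases x)
    case (Inl i)
    then have "i \<in> {0..n}" using x by (auto simp: aux_states_def)
    then show ?thesis
      using T unfolding Inl mc_terminates_def by (simp add: mc_pow_aux_Inl_Inl[OF G sd])
  next
    case (Inr r)
    then obtain i u v where r: "r = (i, u, v)" "i \<in> {1..n}" "u \<in> U i" "v \<in> V i"
      using x by (auto simp: aux_states_eq triples_def)
    have step: "mc_pow (aux_states n U V) (aux_P V p nub md) (Suc m) x (Inl 0) =
        (\<Sum>j\<in>{0..n}. p i u v j * mc_pow {0..n} (game_P n U V p (det_policy md) nub) m j 0)" for m
    proof -
      have "mc_pow (aux_states n U V) (aux_P V p nub md) (Suc m) x (Inl 0) =
          (\<Sum>z\<in>aux_states n U V. aux_P V p nub md x z * mc_pow (aux_states n U V) (aux_P V p nub md) m z (Inl 0))"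
        by (rule mc_pow_Suc_left[OF finite_aux_states[OF G] x]) (simp add: aux_states_def)
      also have "\<dots> = (\<Sum>j\<in>{0..n}. p i u v j * mc_pow (aux_states n U V) (aux_P V p nub md) m (Inl j) (Inl 0))"
        by (simp add: sum_aux_states[OF G] Inr r(1) aux_P_Inr)
      also have "\<dots> = (\<Sum>j\<in>{0..n}. p i u v j * mc_pow {0..n} (game_P n U V p (det_policy md) nub) m j 0)"
        by (simp add: mc_pow_aux_Inl_Inl[OF G sd])
      finally show ?thesis .
    qed
    have "(\<lambda>m. \<Sum>j\<in>{0..n}. p i u v j * mc_pow {0..n} (game_P n U V p (det_policy md) nub) m j 0)
          \<longlonglongrightarrow> (\<Sum>j\<in>{0..n}. p i u v j * 1)"
      using T unfolding mc_terminates_def by (intro tendsto_sum tendsto_mult tendsto_const) auto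
    moreover have "(\<Sum>j\<in>{0..n}. p i u v j * 1) = 1"
      using G r by (simp add: ssp_game_def)
    ultimately have "(\<lambda>m. mc_pow (aux_states n U V) (aux_P V p nub md) (Suc m) x (Inl 0)) \<longlonglongrightarrow> 1"
      unfolding step by simp
    then show ?thesis
      unfolding mc_terminates_def by (rule LIMSEQ_imp_Suc)
  qed
qed

theorem lemma4p2:
  fixes n :: nat
    and U :: "nat \<Rightarrow> 'u set" and V :: "nat \<Rightarrow> 'v set"
    and p :: "nat \<Rightarrow> 'u \<Rightarrow> 'v \<Rightarrow> nat \<Rightarrow> real"
    and gh :: "nat \<Rightarrow> 'u \<Rightarrow> 'v \<Rightarrow> nat \<Rightarrow> real"
    and nub :: "nat \<Rightarrow> 'v \<Rightarrow> real"
  assumes "ssp_game n U V p"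
    and "game_model_assumption n U V p gh"
    and "essentially_proper n U V p gh nub"
  shows "aux_ssp_model_assumption n U V p gh nub"
proof -
  note G = assms(1)
  have nu: "sr_policy n V nub" using assms(3) by (simp add: essentially_proper_def)
  obtain mu where "sr_policy n U mu" "\<not> prolonging n U V p mu nub"
    using assms(3) by (auto simp: essentially_proper_def)
  then obtain md where "sd_policy n U md" "\<not> prolonging n U V p (det_policy md) nub"
    using exists_det_not_prolonging[OF G _ nu] by blast
  then have proper: "\<exists>md. sd_policy n U md \<and> aux_proper n U V p nub md"
    using aux_proper_if_not_prolonging[OF G _ nu] by blast
  have "\<exists>x\<in>aux_states n U V. aux_cost n U V p gh nub md x = \<infinity>"
    if sd: "sd_policy n U md" and "\<not> aux_proper n U V p nub md" for md
  proof -
    have "prolonging n U V p (det_policy md) nub"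
      using that aux_proper_if_not_prolonging[OF G sd nu] by blast
    then obtain i where "i \<in> {1..n}" "game_J n U V p gh (det_policy md) nub i = \<infinity>"
      using assms(3) sr_policy_det_policy[OF G sd] unfolding essentially_proper_def by blast
    then show ?thesis
      using aux_cost_Inl[OF G sd, of gh nub i] by (intro bexI[of _ "Inl i"]) (auto simp: aux_states_def)
  qed
  then show ?thesis
    using proper unfolding aux_ssp_model_assumption_def by blast
qed

end
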